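(* Let $(S,K,I)$ be a split graph. If the factor graph $\Phi(S)$ contains an induced path $v_1v_2v_3$ such that $d_1\leq d_2$ and $\sigma_{23}=1$, then: (1) $N_1-N_2=\{x\}=N_3-N_2$ for some vertex $x$ of $S$; (2) $N_3=\{x\}\dot\cup(N_2\cap N_3)\subsetneq N_1\cup N_2$; (3) $\sigma_{12}=d_2-d_1+1$.
   Context: A split graph $(S,K,I)$ is a graph $S$ together with a fixed partition $V(S)=K\dot\cup I$, where $K$ is a clique and $I$ is an independent set. For a vertex $v_i$ of $S$, $N_i$ denotes its open neighborhood in $S$ and $d_i=|N_i|$; $\eta_{uv}=|N_u\cap N_v|$. The factor graph $\Phi(S)$ is the loopless multigraph with vertex set $I$ in which, for distinct $u,v\in I$, there is one edge joining $u$ and $v$ for each 2-switch of $S$ acting on $u$ and $v$ (a 2-switch replaces edges $ab,cd$ with $ac,bd$ when $ab,cd\in E(S)$ and $ac,bd\notin E(S)$); equivalently, the multiplicity of $uv$ is $\sigma_{uv}=(d_u-\eta_{uv})(d_v-\eta_{uv})$, and $u,v$ are adjacent iff $\sigma_{uv}>0$; $\sigma_{ij}$ denotes $\sigma_{v_iv_j}$. An induced path in $\Phi(S)$ consists of distinct vertices with consecutive ones adjacent and no other pair adjacent (multiplicities ignored). *)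

theory Defs
  imports Main
begin

definition simple_graph :: "'a set \<Rightarrow> ('a \<Rightarrow> 'a \<Rightarrow> bool) \<Rightarrow> bool" where
  "simple_graph V E \<longleftrightarrow> finite V \<and> (\<forall>u v. E u v \<longrightarrow> u \<in> V \<and> v \<in> V)
     \<and> (\<forall>u v. E u v \<longrightarrow> E v u) \<and> (\<forall>u. \<not> E u u)"

definition split_graph :: "'a set \<Rightarrow> ('a \<Rightarrow> 'a \<Rightarrow> bool) \<Rightarrow> 'a set \<Rightarrow> 'a set \<Rightarrow> bool" where
  "split_graph V E K I \<longleftrightarrow> simple_graph V E \<and> V = K \<union> I \<and> K \<inter> I = {}
     \<and> (\<forall>u\<in>K. \<forall>v\<in>K. u \<noteq> v \<longrightarrow> E u v)
     \<and> (\<forall>u\<in>I. \<forall>v\<in>I. \<not> E u v)"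

definition nbhd :: "'a set \<Rightarrow> ('a \<Rightarrow> 'a \<Rightarrow> bool) \<Rightarrow> 'a \<Rightarrow> 'a set" where
  "nbhd V E v = {u \<in> V. E v u}"

definition deg :: "'a set \<Rightarrow> ('a \<Rightarrow> 'a \<Rightarrow> bool) \<Rightarrow> 'a \<Rightarrow> nat" where
  "deg V E v = card (nbhd V E v)"

definition eta :: "'a set \<Rightarrow> ('a \<Rightarrow> 'a \<Rightarrow> bool) \<Rightarrow> 'a \<Rightarrow> 'a \<Rightarrow> nat" where
  "eta V E u v = card (nbhd V E u \<inter> nbhd V E v)"

text \<open>Multiplicity of the edge uv in the factor graph Phi(S) (u, v distinct in I).\<close>
definition sigma :: "'a set \<Rightarrow> ('a \<Rightarrow> 'a \<Rightarrow> bool) \<Rightarrow> 'a \<Rightarrow> 'a \<Rightarrow> nat" where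
  "sigma V E u v = (deg V E u - eta V E u v) * (deg V E v - eta V E u v)"

definition factor_adj :: "'a set \<Rightarrow> ('a \<Rightarrow> 'a \<Rightarrow> bool) \<Rightarrow> 'a set \<Rightarrow> 'a \<Rightarrow> 'a \<Rightarrow> bool" where
  "factor_adj V E I u v \<longleftrightarrow> u \<in> I \<and> v \<in> I \<and> u \<noteq> v \<and> sigma V E u v > 0"

definition factor_induced_P3 ::
  "'a set \<Rightarrow> ('a \<Rightarrow> 'a \<Rightarrow> bool) \<Rightarrow> 'a set \<Rightarrow> 'a \<Rightarrow> 'a \<Rightarrow> 'a \<Rightarrow> bool" where
  "factor_induced_P3 V E I v1 v2 v3 \<longleftrightarrow>
     v1 \<in> I \<and> v2 \<in> I \<and> v3 \<in> I \<and> v1 \<noteq> v2 \<and> v2 \<noteq> v3 \<and> v1 \<noteq> v3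
     \<and> factor_adj V E I v1 v2 \<and> factor_adj V E I v2 v3 \<and> \<not> factor_adj V E I v1 v3"

end

theory Submission
  imports Defs
begin

text \<open>Only finiteness of the split graph matters: everything follows from the set differences
  of the three neighbourhoods, since \<open>\<sigma>\<^sub>u\<^sub>v = |N\<^sub>u - N\<^sub>v| |N\<^sub>v - N\<^sub>u|\<close>.
  Non-adjacency of \<open>v\<^sub>1, v\<^sub>3\<close> makes \<open>N\<^sub>1, N\<^sub>3\<close> comparable, and \<open>\<sigma>\<^sub>2\<^sub>3 = 1\<close> gives \<open>d\<^sub>2 = d\<^sub>3\<close>,
  so \<open>N\<^sub>3 \<subseteq> N\<^sub>1\<close> would force \<open>N\<^sub>1 = N\<^sub>3\<close> by \<open>d\<^sub>1 \<le> d\<^sub>2\<close>. Hence \<open>N\<^sub>1 \<subseteq> N\<^sub>3\<close>, and the nonempty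
  set \<open>N\<^sub>1 - N\<^sub>2\<close> lies in the singleton \<open>N\<^sub>3 - N\<^sub>2\<close>.\<close>

lemma card_eq_if_card_Diff_eq:
  assumes "finite A" "finite B" "card (A - B) = card (B - A)"
  shows "card A = card B"
proof -
  have "card A = card (A \<inter> B) + card (A - B)"
    using assms(1) by (rule card_Int_Diff)
  also have "\<dots> = card (B \<inter> A) + card (B - A)"
    by (simp only: assms(3) Int_commute)
  also have "\<dots> = card B"
    using assms(2) by (rule card_Int_Diff[symmetric])
  finally show ?thesis .
qed

lemma card_Diff_mult_card_Diff_if_Diff_singleton:
  assumes "finite A" "finite B" "A - B = {x}" "card A \<le> card B"
  shows "card (A - B) * card (B - A) = card B - card A + 1"
proof -
  have "card A = card (A \<inter> B) + 1"
    using assms(1,3) card_Int_Diff[of A B] by simp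
  moreover have "card (B - A) = card B - card (A \<inter> B)"
    using assms(2) by (simp add: card_Diff_subset_Int Int_commute)
  moreover have "card (A - B) = 1"
    using assms(3) by simp
  ultimately show ?thesis
    using assms(4) by simp
qed

lemma Diff_singleton_if_comparable:
  assumes fin: "finite A" "finite B" "finite C"
    and CB: "card (C - B) = 1" and BC: "card (B - C) = 1"
    and comparable: "A \<subseteq> C \<or> C \<subseteq> A"
    and AB: "A - B \<noteq> {}"
    and le: "card A \<le> card B"
  obtains x where "A - B = {x}" "C - B = {x}" "C \<subset> A \<union> B"
proof -
  have AC: "A \<subseteq> C"
  proof (cases "C \<subseteq> A")
    case True
    have "card C = card B"
      by (rule card_eq_if_card_Diff_eq[OF fin(3,2)]) (simp add: CB BC)
    moreover have "card C \<le> card A"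
      using fin(1) True by (rule card_mono)
    ultimately have "card C = card A"
      using le by linarith
    then have "C = A"
      by (rule card_subset_eq[OF fin(1) True])
    then show ?thesis by simp
  next
    case False
    with comparable show ?thesis by blast
  qed
  obtain x where x: "C - B = {x}"
    using CB by (rule card_1_singletonE)
  obtain y where y: "B - C = {y}"
    using BC by (rule card_1_singletonE)
  have "A - B \<subseteq> {x}"
    using AC x by blast
  with AB have AB_x: "A - B = {x}"
    by (simp add: subset_singleton_iff)
  have "C \<subseteq> A \<union> B"
    using x AB_x by blast
  moreover have "y \<in> A \<union> B - C"
    using y by blast
  ultimately have "C \<subset> A \<union> B"
    by blast
  with AB_x x show ?thesis
    by (rule that)
qed

lemma finite_nbhd: "finite V \<Longrightarrow> finite (nbhd V E v)"
  unfolding nbhd_def by simp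

lemma sigma_eq_card_Diff_mult:
  assumes "finite V"
  shows "sigma V E u v = card (nbhd V E u - nbhd V E v) * card (nbhd V E v - nbhd V E u)"
  using finite_nbhd[OF assms]
  by (simp add: sigma_def deg_def eta_def card_Diff_subset_Int Int_commute)

lemma sigma_eq_0_iff_nbhd_comparable:
  assumes "finite V"
  shows "sigma V E u v = 0 \<longleftrightarrow> nbhd V E u \<subseteq> nbhd V E v \<or> nbhd V E v \<subseteq> nbhd V E u"
  using finite_nbhd[OF assms] by (simp add: sigma_eq_card_Diff_mult[OF assms])

lemma sigma_eq_1_iff:
  assumes "finite V"
  shows "sigma V E u v = 1 \<longleftrightarrow>
    card (nbhd V E u - nbhd V E v) = 1 \<and> card (nbhd V E v - nbhd V E u) = 1"
  by (simp add: sigma_eq_card_Diff_mult[OF assms])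

theorem proposition4p4:
  fixes V K I :: "'a set" and E :: "'a \<Rightarrow> 'a \<Rightarrow> bool" and v1 v2 v3 :: 'a
  assumes "split_graph V E K I"
    and "factor_induced_P3 V E I v1 v2 v3"
    and "deg V E v1 \<le> deg V E v2"
    and "sigma V E v2 v3 = 1"
  shows "\<exists>x\<in>V.
      nbhd V E v1 - nbhd V E v2 = {x} \<and> nbhd V E v3 - nbhd V E v2 = {x}
    \<and> nbhd V E v3 = {x} \<union> (nbhd V E v2 \<inter> nbhd V E v3)
    \<and> x \<notin> nbhd V E v2 \<inter> nbhd V E v3
    \<and> nbhd V E v3 \<subset> nbhd V E v1 \<union> nbhd V E v2
    \<and> sigma V E v1 v2 = deg V E v2 - deg V E v1 + 1"
proof -
  let ?N = "nbhd V E"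
  have fin: "finite V"
    using assms(1) unfolding split_graph_def simple_graph_def by blast
  have "sigma V E v1 v2 \<noteq> 0" and "sigma V E v1 v3 = 0"
    using assms(2) unfolding factor_induced_P3_def factor_adj_def by auto
  then have N12: "?N v1 - ?N v2 \<noteq> {}" and N13: "?N v1 \<subseteq> ?N v3 \<or> ?N v3 \<subseteq> ?N v1"
    by (simp_all add: sigma_eq_0_iff_nbhd_comparable[OF fin])
  have N23: "card (?N v3 - ?N v2) = 1" "card (?N v2 - ?N v3) = 1"
    using assms(4) unfolding sigma_eq_1_iff[OF fin] by simp_all
  have le: "card (?N v1) \<le> card (?N v2)"
    using assms(3) unfolding deg_def .
  obtain x where x12: "?N v1 - ?N v2 = {x}" and x32: "?N v3 - ?N v2 = {x}"
      and proper: "?N v3 \<subset> ?N v1 \<union> ?N v2"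
    by (rule Diff_singleton_if_comparable[OF finite_nbhd finite_nbhd finite_nbhd N23 N13 N12 le])
      (use fin in simp_all)
  have "?N v3 = {x} \<union> (?N v2 \<inter> ?N v3)" and "x \<notin> ?N v2 \<inter> ?N v3"
    using x32 by blast+
  moreover have "sigma V E v1 v2 = deg V E v2 - deg V E v1 + 1"
    unfolding sigma_eq_card_Diff_mult[OF fin] deg_def
    by (rule card_Diff_mult_card_Diff_if_Diff_singleton[OF finite_nbhd finite_nbhd x12 le])
      (use fin in simp_all)
  moreover have "x \<in> V"
    using x12 unfolding nbhd_def by blast
  ultimately show ?thesis
    using x12 x32 proper by blast
qed

end
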